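(* Consider the causal directed acyclic graph $G_a$ on the variables $X, D, S, Y, K_D, K_S$ whose edges are exactly $X \to D$, $D \to Y$, $X \to S$, $S \to Y$, $K_D \to X$, $K_D \to Y$, $K_S \to X$, $K_S \to Y$, and suppose that only $X$, $D$ and $Y$ are observed (i.e. $S$, $K_D$, $K_S$ are unobserved). Then the interventional distribution $P(y \mid do(x))$ is not identifiable from the joint distribution of the observed variables $(X, D, Y)$.
   Context: A causal model over a DAG: each variable is generated from its parents in the graph and independent exogenous noise; $P(y \mid do(x))$ denotes the distribution of $Y$ after setting $X = x$ by intervention (removing all edges into $X$). "Identifiable" means that $P(y\mid do(x))$ is uniquely determined by the joint distribution of the observed variables for every causal model compatible with the graph (with strictly positive observational distribution). Interpretation in the paper: $X$ is a blurry image, $D$ a pixel-level feature, $S$ a semantic-level feature, $Y$ the restored image, and $K_D$, $K_S$ the complete pixel-level and semantic-level knowledge contained in $X$. *)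

theory Defs
  imports "HOL-Probability.Probability_Mass_Function"
begin

text \<open>Each variable is a function of its parents in G_a and of its own exogenous noise;
  the six noises are mutually independent with distributions given by pmfs.\<close>

record ('x, 'd, 's, 'y, 'kd, 'ks, 'u) ga_scm =
  noise_KD :: "'u pmf"
  noise_KS :: "'u pmf"
  noise_X  :: "'u pmf"
  noise_D  :: "'u pmf"
  noise_S  :: "'u pmf"
  noise_Y  :: "'u pmf"
  f_KD :: "'u \<Rightarrow> 'kd"
  f_KS :: "'u \<Rightarrow> 'ks"
  f_X  :: "'kd \<Rightarrow> 'ks \<Rightarrow> 'u \<Rightarrow> 'x"
  f_D  :: "'x \<Rightarrow> 'u \<Rightarrow> 'd"
  f_S  :: "'x \<Rightarrow> 'u \<Rightarrow> 's"
  f_Y  :: "'d \<Rightarrow> 's \<Rightarrow> 'kd \<Rightarrow> 'ks \<Rightarrow> 'u \<Rightarrow> 'y"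

text \<open>With iv = None this is the observational
  model; with iv = Some x0 it is the model after the intervention do(X = x0), i.e. the
  mechanism of X is replaced by the constant x0 (all edges into X removed).\<close>
definition ga_joint ::
  "('x, 'd, 's, 'y, 'kd, 'ks, 'u) ga_scm \<Rightarrow> 'x option \<Rightarrow> ('x \<times> 'd \<times> 's \<times> 'y \<times> 'kd \<times> 'ks) pmf" where
  "ga_joint M iv =
     do { ukd \<leftarrow> noise_KD M; uks \<leftarrow> noise_KS M; ux \<leftarrow> noise_X M;
          ud \<leftarrow> noise_D M; us \<leftarrow> noise_S M; uy \<leftarrow> noise_Y M;
          let kd = f_KD M ukd; let ks = f_KS M uks;
          let x = (case iv of None \<Rightarrow> f_X M kd ks ux | Some x0 \<Rightarrow> x0);
          let d = f_D M x ud; let s = f_S M x us;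
          let y = f_Y M d s kd ks uy;
          return_pmf (x, d, s, y, kd, ks) }"

definition ga_obs :: "('x, 'd, 's, 'y, 'kd, 'ks, 'u) ga_scm \<Rightarrow> ('x \<times> 'd \<times> 'y) pmf" where
  "ga_obs M = map_pmf (\<lambda>(x, d, s, y, kd, ks). (x, d, y)) (ga_joint M None)"

definition ga_do :: "('x, 'd, 's, 'y, 'kd, 'ks, 'u) ga_scm \<Rightarrow> 'x \<Rightarrow> 'y \<Rightarrow> real" where
  "ga_do M x y = pmf (map_pmf (\<lambda>(x, d, s, y, kd, ks). y) (ga_joint M (Some x))) y"

definition ga_identifiable_in :: "('x, 'd, 's, 'y, 'kd, 'ks, 'u) ga_scm set \<Rightarrow> bool" where
  "ga_identifiable_in C \<longleftrightarrow>
     (\<forall>M1\<in>C. \<forall>M2\<in>C.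
        (\<forall>v. pmf (ga_obs M1) v > 0) \<and> ga_obs M1 = ga_obs M2 \<longrightarrow>
        (\<forall>x y. ga_do M1 x y = ga_do M2 x y))"

end

theory Submission
  imports Defs
begin

text \<open>Two models compatible with G_a induce the same uniform distribution of (X, D, Y) but
  different values of P(Y = True | do(x)). In the confounded model X copies the latent K_D,
  S copies X, and Y is a fresh fair coin if S = K_D and True otherwise. Observationally
  S = K_D always, so Y is independent of (X, D); under do(X = x) the event S \<noteq> K_D has
  probability 1/2, whence P(Y = True | do(x)) = 3/4. In the unconfounded model X, D, Y are
  independent fair coins, so P(Y = True | do(x)) = 1/2.\<close>

lemma not_ga_identifiable_inI:
  assumes "M1 \<in> C" "M2 \<in> C"
    and "\<And>v. pmf (ga_obs M1) v > 0" "ga_obs M1 = ga_obs M2"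
    and "ga_do M1 x y \<noteq> ga_do M2 x y"
  shows "\<not> ga_identifiable_in C"
  using assms unfolding ga_identifiable_in_def by blast

definition coin :: "nat pmf" where
  "coin = pmf_of_set {0, 1}"

definition three_coins :: "(bool \<times> bool \<times> bool) pmf" where
  "three_coins = do { a \<leftarrow> coin; b \<leftarrow> coin; c \<leftarrow> coin; return_pmf (a = 0, b = 0, c = 0) }"

lemma pmf_three_coins: "pmf three_coins v = 1 / 8"
proof -
  obtain a b c where "v = (a, b, c)" by (cases v)
  then show ?thesis
    unfolding three_coins_def coin_def
    by (cases a; cases b; cases c) (simp_all add: pmf_bind integral_pmf_of_set)
qed

definition confounded_model :: "(bool, bool, bool, bool, bool, bool, nat) ga_scm" where
  "confounded_model =
     \<lparr> noise_KD = coin, noise_KS = coin, noise_X = coin, noise_D = coin, noise_S = coin,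
       noise_Y = coin, f_KD = (\<lambda>u. u = 0), f_KS = (\<lambda>u. u = 0), f_X = (\<lambda>kd ks u. kd),
       f_D = (\<lambda>x u. u = 0), f_S = (\<lambda>x u. x),
       f_Y = (\<lambda>d s kd ks u. if s = kd then u = 0 else True) \<rparr>"

definition unconfounded_model :: "(bool, bool, bool, bool, bool, bool, nat) ga_scm" where
  "unconfounded_model =
     \<lparr> noise_KD = coin, noise_KS = coin, noise_X = coin, noise_D = coin, noise_S = coin,
       noise_Y = coin, f_KD = (\<lambda>u. u = 0), f_KS = (\<lambda>u. u = 0), f_X = (\<lambda>kd ks u. u = 0),
       f_D = (\<lambda>x u. u = 0), f_S = (\<lambda>x u. x), f_Y = (\<lambda>d s kd ks u. u = 0) \<rparr>"

lemma ga_obs_confounded_model: "ga_obs confounded_model = three_coins"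
  unfolding ga_obs_def ga_joint_def confounded_model_def three_coins_def
  by (simp add: map_bind_pmf bind_pmf_const Let_def)

lemma ga_obs_unconfounded_model: "ga_obs unconfounded_model = three_coins"
  unfolding ga_obs_def ga_joint_def unconfounded_model_def three_coins_def
  by (simp add: map_bind_pmf bind_pmf_const Let_def)

lemma ga_do_confounded_model: "ga_do confounded_model x True = 3 / 4"
  unfolding ga_do_def ga_joint_def confounded_model_def coin_def
  by (cases x) (simp_all add: map_bind_pmf bind_pmf_const Let_def pmf_bind integral_pmf_of_set)

lemma ga_do_unconfounded_model: "ga_do unconfounded_model x True = 1 / 2"
  unfolding ga_do_def ga_joint_def unconfounded_model_def
  by (simp add: map_bind_pmf bind_pmf_const Let_def coin_def pmf_bind integral_pmf_of_set)

theorem mainTheorem1: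
  shows "\<not> ga_identifiable_in (UNIV :: (bool, bool, bool, bool, bool, bool, nat) ga_scm set)"
proof (rule not_ga_identifiable_inI)
  show "confounded_model \<in> UNIV" "unconfounded_model \<in> UNIV" by simp_all
  show "pmf (ga_obs confounded_model) v > 0" for v
    by (simp add: ga_obs_confounded_model pmf_three_coins)
  show "ga_obs confounded_model = ga_obs unconfounded_model"
    by (simp add: ga_obs_confounded_model ga_obs_unconfounded_model)
  show "ga_do confounded_model True True \<noteq> ga_do unconfounded_model True True"
    by (simp add: ga_do_confounded_model ga_do_unconfounded_model)
qed

end
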